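(* Let $\succcurlyeq$ be a preference relation on bets over a propositional language $\mathcal{L}$, and let $(\Omega,t,\lambda)$ and $(\Omega',t',\lambda')$ be subjective models of uncertainty representing $\succcurlyeq$ with $t$ sound, $t'$ exact and $\lambda'$ additive. Then for all strategies $s:\mathcal{L}\to\mathbb{R}$, $\int t_\circ(s)\,\mathrm{d}\lambda=\int t'_\bullet(s)\,\mathrm{d}\lambda'$.
   Context: Let $\mathbb{P}$ be a set of propositional variables containing distinguished $\mathbf{T}$, $\mathbf{F}$, and $\mathcal{L}$ the language generated by $\neg,\land,\lor$. A bet is a finitely supported $b:\mathcal{L}\to[0,1]$ summing to $1$. A truth valuation on $\Omega$ is $t:\mathcal{L}\to2^\Omega$ with $t(\mathbf{T})=\Omega,t(\mathbf{F})=\emptyset$; exact: logically equivalent statements have equal images; sound: exact, monotone ($\phi\implies\psi\Rightarrow t(\phi)\subseteq t(\psi)$), symmetric ($t(\neg\phi)=\Omega\setminus t(\phi)$) and $\land$-distributive; for sound $t$, $t(\mathcal{L})$ is a field. A likelihood appraisal on a field $\Sigma$ is $\lambda:\Sigma\to[0,1]$ with $\lambda(\emptyset)=0,\lambda(\Omega)=1$ (not necessarily monotone); additive if finitely additive. A subjective model $(\Omega,t,\lambda)$ represents $\succcurlyeq$ if $b\succcurlyeq b'\iff\sum_\phi b(\phi)\lambda(t(\phi))\ge\sum_\phi b'(\phi)\lambda(t(\phi))$. For a likelihood appraisal $\lambda$ and measurable $x:\Omega\to\mathbb{R}$, $\int x\,\mathrm{d}\lambda=\int_{-\infty}^{\infty}\lambda(\{\omega: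 x(\omega)\ge r\})\,\mathrm{d}r$ (Lebesgue integral over $\mathbb{R}$; for $x$ of finite range this is a finite sum). A strategy is a finitely supported $s:\mathcal{L}\to\mathbb{R}$; $t_\circ(s)=\sum_{\phi}s(\phi)\mathbf{1}_{t(\phi)}$. For $t(\mathcal{L})$-measurable $x$ with finite image $\{\alpha_1>\dots>\alpha_n\}$, $\alpha_{n+1}=0$, choosing $\phi_k$ with $t(\phi_k)=x^{-1}(\{\alpha_1,\dots,\alpha_k\})$, define $\xi^t_{t'}(x)=[\sum_{k=1}^n(\alpha_k-\alpha_{k+1})\mathbf{1}_{t'(\phi_k)}]$, the $\lambda'$-a.e. equivalence class. Then $t'_\bullet(s)=\xi^t_{t'}(t_\circ(s))$; this class does not depend on the choice of the sound representation $(\Omega,t,\lambda)$, and its integral against the additive $\lambda'$ is well defined. *)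

theory Defs
  imports "HOL-Analysis.Analysis"
begin

datatype 'p form = TT | FF | Var 'p | Neg "'p form" | Conj "'p form" "'p form" | Disj "'p form" "'p form"

primrec eval :: "('p \<Rightarrow> bool) \<Rightarrow> 'p form \<Rightarrow> bool" where
  "eval v TT = True"
| "eval v FF = False"
| "eval v (Var p) = v p"
| "eval v (Neg a) = (\<not> eval v a)"
| "eval v (Conj a b) = (eval v a \<and> eval v b)"
| "eval v (Disj a b) = (eval v a \<or> eval v b)"

definition implies :: "'p form \<Rightarrow> 'p form \<Rightarrow> bool" where
  "implies a b \<longleftrightarrow> (\<forall>v. eval v a \<longrightarrow> eval v b)"

definition log_equiv :: "'p form \<Rightarrow> 'p form \<Rightarrow> bool" where
  "log_equiv a b \<longleftrightarrow> (\<forall>v. eval v a = eval v b)"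

definition truth_valuation :: "'w set \<Rightarrow> ('p form \<Rightarrow> 'w set) \<Rightarrow> bool" where
  "truth_valuation \<Omega> t \<longleftrightarrow> (\<forall>a. t a \<subseteq> \<Omega>) \<and> t TT = \<Omega> \<and> t FF = {}"

definition exact :: "'w set \<Rightarrow> ('p form \<Rightarrow> 'w set) \<Rightarrow> bool" where
  "exact \<Omega> t \<longleftrightarrow> truth_valuation \<Omega> t \<and> (\<forall>a b. log_equiv a b \<longrightarrow> t a = t b)"

definition sound :: "'w set \<Rightarrow> ('p form \<Rightarrow> 'w set) \<Rightarrow> bool" where
  "sound \<Omega> t \<longleftrightarrow> exact \<Omega> t
     \<and> (\<forall>a b. implies a b \<longrightarrow> t a \<subseteq> t b)
     \<and> (\<forall>a. t (Neg a) = \<Omega> - t a)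
     \<and> (\<forall>a b. t (Conj a b) = t a \<inter> t b)"

text \<open>Likelihood appraisal on a field (algebra) \<Sigma> of subsets of \<Omega> (not necessarily monotone).\<close>
definition likelihood_appraisal :: "'w set \<Rightarrow> 'w set set \<Rightarrow> ('w set \<Rightarrow> real) \<Rightarrow> bool" where
  "likelihood_appraisal \<Omega> \<Sigma> l \<longleftrightarrow> algebra \<Omega> \<Sigma> \<and> (\<forall>A\<in>\<Sigma>. 0 \<le> l A \<and> l A \<le> 1)
     \<and> l {} = 0 \<and> l \<Omega> = 1"

definition additive_on :: "'w set set \<Rightarrow> ('w set \<Rightarrow> real) \<Rightarrow> bool" where
  "additive_on \<Sigma> l \<longleftrightarrow> (\<forall>A\<in>\<Sigma>. \<forall>B\<in>\<Sigma>. A \<inter> B = {} \<longrightarrow> l (A \<union> B) = l A + l B)"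

definition subjective_model :: "'w set \<Rightarrow> 'w set set \<Rightarrow> ('p form \<Rightarrow> 'w set) \<Rightarrow> ('w set \<Rightarrow> real) \<Rightarrow> bool" where
  "subjective_model \<Omega> \<Sigma> t l \<longleftrightarrow> truth_valuation \<Omega> t \<and> likelihood_appraisal \<Omega> \<Sigma> l \<and> range t \<subseteq> \<Sigma>"

definition supp :: "('p form \<Rightarrow> real) \<Rightarrow> 'p form set" where
  "supp s = {a. s a \<noteq> 0}"

definition is_bet :: "('p form \<Rightarrow> real) \<Rightarrow> bool" where
  "is_bet b \<longleftrightarrow> finite (supp b) \<and> (\<forall>a. 0 \<le> b a \<and> b a \<le> 1) \<and> (\<Sum>a\<in>supp b. b a) = 1"

definition bet_value :: "('p form \<Rightarrow> 'w set) \<Rightarrow> ('w set \<Rightarrow> real) \<Rightarrow> ('p form \<Rightarrow> real) \<Rightarrow> real" where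
  "bet_value t l b = (\<Sum>a\<in>supp b. b a * l (t a))"

definition represents :: "('p form \<Rightarrow> 'w set) \<Rightarrow> ('w set \<Rightarrow> real)
     \<Rightarrow> (('p form \<Rightarrow> real) \<Rightarrow> ('p form \<Rightarrow> real) \<Rightarrow> bool) \<Rightarrow> bool" where
  "represents t l pref \<longleftrightarrow> (\<forall>b b'. is_bet b \<longrightarrow> is_bet b' \<longrightarrow>
       (pref b b' \<longleftrightarrow> bet_value t l b \<ge> bet_value t l b'))"

definition is_strategy :: "('p form \<Rightarrow> real) \<Rightarrow> bool" where
  "is_strategy s \<longleftrightarrow> finite (supp s)"

definition t_circ :: "('p form \<Rightarrow> 'w set) \<Rightarrow> ('p form \<Rightarrow> real) \<Rightarrow> 'w \<Rightarrow> real" where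
  "t_circ t s \<omega> = (\<Sum>a\<in>supp s. s a * indicator (t a) \<omega>)"

text \<open>Values of x on \<Omega> in decreasing order \<alpha>_1 > ... > \<alpha>_n (0-indexed here),
with \<alpha>_{n+1} = 0.\<close>
definition desc_vals :: "'w set \<Rightarrow> ('w \<Rightarrow> real) \<Rightarrow> real list" where
  "desc_vals \<Omega> x = rev (sorted_list_of_set (x ` \<Omega>))"

definition alpha :: "'w set \<Rightarrow> ('w \<Rightarrow> real) \<Rightarrow> nat \<Rightarrow> real" where
  "alpha \<Omega> x k = (if k < length (desc_vals \<Omega> x) then desc_vals \<Omega> x ! k else 0)"

definition lintegral_fin :: "'w set \<Rightarrow> ('w set \<Rightarrow> real) \<Rightarrow> ('w \<Rightarrow> real) \<Rightarrow> real" where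
  "lintegral_fin \<Omega> l x = (\<Sum>k<length (desc_vals \<Omega> x).
      (alpha \<Omega> x k - alpha \<Omega> x (Suc k)) * l {\<omega>\<in>\<Omega>. alpha \<Omega> x k \<le> x \<omega>})"

definition level_choice :: "'w set \<Rightarrow> ('p form \<Rightarrow> 'w set) \<Rightarrow> ('w \<Rightarrow> real) \<Rightarrow> (nat \<Rightarrow> 'p form) \<Rightarrow> bool" where
  "level_choice \<Omega> t x \<phi> \<longleftrightarrow> (\<forall>k<length (desc_vals \<Omega> x).
       t (\<phi> k) = {\<omega>\<in>\<Omega>. \<exists>j\<le>k. x \<omega> = alpha \<Omega> x j})"

text \<open>Representative of \<xi>^t_{t'}(x) for a given admissible choice \<phi>.\<close>
definition xi :: "'w set \<Rightarrow> ('w \<Rightarrow> real) \<Rightarrow> ('p form \<Rightarrow> 'v set) \<Rightarrow> (nat \<Rightarrow> 'p form) \<Rightarrow> 'v \<Rightarrow> real" where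
  "xi \<Omega> x t' \<phi> \<omega> = (\<Sum>k<length (desc_vals \<Omega> x).
      (alpha \<Omega> x k - alpha \<Omega> x (Suc k)) * indicator (t' (\<phi> k)) \<omega>)"

end

theory Submission
  imports Defs
begin

(* Both sides are sums \<Sum>k (\<alpha>_k - \<alpha>_(k+1)) * (likelihood of a set) with the same
   coefficients.  On the left, the superlevel set {x \<ge> \<alpha>_k} of x = t\<^sub>\<circ>(s) is t(\<phi>_k) by
   the choice of \<phi>.  Two models representing the same preference agree on every statement,
   \<lambda>(t \<phi>) = \<lambda>'(t' \<phi>): the bet on \<phi> alone and the bet placing \<lambda>(t \<phi>) on T and the rest on F
   have equal value in the first model, so they are indifferent, so they have equal value in
   the second.  On the right, t'\<^sub>\<bullet>(s) = \<Sum>k (\<alpha>_k - \<alpha>_(k+1)) 1_(t'(\<phi>_k)) is a simple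
   function whose sets need not be nested, since t' is only exact; but additivity of \<lambda>' makes
   its integral linear: on the atoms of the finite algebra generated by the sets t'(\<phi>_k) the
   function is constant, and regrouping the sum over atoms gives \<Sum>k (\<alpha>_k - \<alpha>_(k+1)) \<lambda>'(t'(\<phi>_k)). *)

lemma sorted_wrt_greater_nth_le_iff:
  fixes xs :: "'a::linorder list"
  assumes "sorted_wrt (>) xs" "i < length xs" "j < length xs"
  shows "xs ! i \<le> xs ! j \<longleftrightarrow> j \<le> i"
  using sorted_wrt_nth_less[OF assms(1)] assms(2,3)
  by (metis le_less linorder_not_le nat_neq_iff)

lemma sum_diff_mult_partial_sums:
  fixes a b :: "nat \<Rightarrow> 'a::comm_ring"
  shows "(\<Sum>k<n. (a k - a (Suc k)) * (\<Sum>j\<le>k. b j)) = (\<Sum>j<n. (a j - a n) * b j)"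
proof (induction n)
  case (Suc n)
  then show ?case
    by (simp add: lessThan_Suc_atMost[symmetric] sum_distrib_left sum_distrib_right
        algebra_simps sum.distrib sum_subtractf)
qed simp

lemma finite_values_if_desc_vals_nonempty:
  "desc_vals \<Omega> x \<noteq> [] \<Longrightarrow> finite (x ` \<Omega>)"
  using sorted_list_of_set.fold_insort_key.infinite by (force simp: desc_vals_def)

lemma set_desc_vals: "finite (x ` \<Omega>) \<Longrightarrow> set (desc_vals \<Omega> x) = x ` \<Omega>"
  by (simp add: desc_vals_def)

lemma distinct_desc_vals: "distinct (desc_vals \<Omega> x)"
  by (simp add: desc_vals_def)

lemma sorted_desc_vals: "sorted_wrt (>) (desc_vals \<Omega> x)"
  by (simp add: desc_vals_def sorted_wrt_rev strict_sorted_list_of_set)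

lemma alpha_eq_nth: "k < length (desc_vals \<Omega> x) \<Longrightarrow> alpha \<Omega> x k = desc_vals \<Omega> x ! k"
  by (simp add: alpha_def)

lemma sum_values_eq_sum_desc_vals:
  "(\<Sum>u\<in>x ` \<Omega>. f u) = (\<Sum>u\<in>set (desc_vals \<Omega> x). f u)"
  by (cases "finite (x ` \<Omega>)") (auto simp: set_desc_vals desc_vals_def)

lemma superlevel_set_eq_UN_level_sets:
  assumes k: "k < length (desc_vals \<Omega> x)"
  shows "{\<omega>\<in>\<Omega>. alpha \<Omega> x k \<le> x \<omega>} = (\<Union>j\<le>k. {\<omega>\<in>\<Omega>. x \<omega> = alpha \<Omega> x j})"
proof -
  let ?ds = "desc_vals \<Omega> x"
  have "alpha \<Omega> x k \<le> x \<omega> \<longleftrightarrow> (\<exists>j\<le>k. x \<omega> = alpha \<Omega> x j)" if "\<omega> \<in> \<Omega>" for \<omega>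
  proof -
    have "x \<omega> \<in> set ?ds"
    proof -
      have "finite (x ` \<Omega>)"
        using k by (intro finite_values_if_desc_vals_nonempty) auto
      then show ?thesis using that by (simp add: set_desc_vals)
    qed
    then obtain i where i: "i < length ?ds" "x \<omega> = ?ds ! i"
      by (auto simp: in_set_conv_nth)
    have "alpha \<Omega> x k \<le> x \<omega> \<longleftrightarrow> i \<le> k"
      using sorted_wrt_greater_nth_le_iff[OF sorted_desc_vals k i(1)] i(2) k
      by (simp add: alpha_eq_nth)
    also have "\<dots> \<longleftrightarrow> (\<exists>j\<le>k. ?ds ! i = ?ds ! j)"
      using distinct_desc_vals[of \<Omega> x] i(1) k
      by (auto simp: nth_eq_iff_index_eq dest: le_less_trans)
    also have "\<dots> \<longleftrightarrow> (\<exists>j\<le>k. x \<omega> = alpha \<Omega> x j)"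
      using i(2) k by (auto simp: alpha_eq_nth)
    finally show ?thesis .
  qed
  then show ?thesis by blast
qed

lemma additive_on_finite_UN:
  assumes "algebra \<Omega> \<Sigma>" "additive_on \<Sigma> l" "l {} = 0"
    and "finite I" "\<And>i. i \<in> I \<Longrightarrow> B i \<in> \<Sigma>" "disjoint_family_on B I"
  shows "l (\<Union>i\<in>I. B i) = (\<Sum>i\<in>I. l (B i))"
  using assms(4-6)
proof (induction I rule: finite_induct)
  case (insert i I)
  have "(\<Union>j\<in>I. B j) \<in> \<Sigma>"
    using insert assms(1) by (intro algebra.axioms(1)[THEN ring_of_sets.finite_UN]) auto
  moreover have "B i \<inter> (\<Union>j\<in>I. B j) = {}"
    using insert.prems(2) insert.hyps(2) by (auto simp: disjoint_family_on_def)
  ultimately have "l (\<Union>j\<in>insert i I. B j) = l (B i) + l (\<Union>j\<in>I. B j)"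
    using assms(2) insert.prems(1) by (simp add: additive_on_def)
  with insert show ?case
    by (simp add: disjoint_family_on_mono[of I "insert i I"] subset_insertI)
qed (simp add: assms(3))

lemma additive_on_superlevel_set:
  assumes "algebra \<Omega> \<Sigma>" "additive_on \<Sigma> l" "l {} = 0"
    and "\<And>u. {\<omega>\<in>\<Omega>. x \<omega> = u} \<in> \<Sigma>" and k: "k < length (desc_vals \<Omega> x)"
  shows "l {\<omega>\<in>\<Omega>. alpha \<Omega> x k \<le> x \<omega>} = (\<Sum>j\<le>k. l {\<omega>\<in>\<Omega>. x \<omega> = alpha \<Omega> x j})"
proof -
  have "disjoint_family_on (\<lambda>j. {\<omega>\<in>\<Omega>. x \<omega> = alpha \<Omega> x j}) {..k}"
    using distinct_desc_vals[of \<Omega> x] k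
    by (auto simp: disjoint_family_on_def alpha_eq_nth nth_eq_iff_index_eq)
  with assms show ?thesis
    unfolding superlevel_set_eq_UN_level_sets[OF k] by (intro additive_on_finite_UN) auto
qed

lemma lintegral_fin_eq_sum_level_sets:
  assumes "algebra \<Omega> \<Sigma>" "additive_on \<Sigma> l" "l {} = 0"
    and "\<And>u. {\<omega>\<in>\<Omega>. x \<omega> = u} \<in> \<Sigma>"
  shows "lintegral_fin \<Omega> l x = (\<Sum>u\<in>x ` \<Omega>. u * l {\<omega>\<in>\<Omega>. x \<omega> = u})"
proof -
  let ?ds = "desc_vals \<Omega> x" and ?a = "alpha \<Omega> x"
  let ?n = "length ?ds"
  let ?L = "\<lambda>j. l {\<omega>\<in>\<Omega>. x \<omega> = ?a j}"
  have "lintegral_fin \<Omega> l x = (\<Sum>k<?n. (?a k - ?a (Suc k)) * (\<Sum>j\<le>k. ?L j))"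
    unfolding lintegral_fin_def using additive_on_superlevel_set[OF assms]
    by (intro sum.cong) auto
  also have "\<dots> = (\<Sum>j<?n. (?a j - ?a ?n) * ?L j)"
    by (rule sum_diff_mult_partial_sums)
  also have "\<dots> = (\<Sum>j<?n. ?a j * ?L j)"
    by (simp add: alpha_def)
  also have "\<dots> = (\<Sum>j<?n. ?ds ! j * l {\<omega>\<in>\<Omega>. x \<omega> = ?ds ! j})"
    by (simp add: alpha_eq_nth)
  also have "\<dots> = (\<Sum>u\<in>set ?ds. u * l {\<omega>\<in>\<Omega>. x \<omega> = u})"
    using sum.reindex_bij_betw[OF bij_betw_nth[OF distinct_desc_vals refl refl]] by simp
  also have "\<dots> = (\<Sum>u\<in>x ` \<Omega>. u * l {\<omega>\<in>\<Omega>. x \<omega> = u})"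
    by (rule sum_values_eq_sum_desc_vals[symmetric])
  finally show ?thesis .
qed

lemma level_set_eq_UN_partition:
  assumes "(\<Union>i\<in>I. B i) = \<Omega>" "\<And>i \<omega>. i \<in> I \<Longrightarrow> \<omega> \<in> B i \<Longrightarrow> x \<omega> = v i"
  shows "{\<omega>\<in>\<Omega>. x \<omega> = u} = (\<Union>i\<in>{i\<in>I. v i = u}. B i)"
  using assms by auto

lemma sum_level_sets_eq_sum_partition:
  assumes "algebra \<Omega> \<Sigma>" "additive_on \<Sigma> l" "l {} = 0"
    and "finite I" "\<And>i. i \<in> I \<Longrightarrow> B i \<in> \<Sigma>" "disjoint_family_on B I"
    and cover: "(\<Union>i\<in>I. B i) = \<Omega>"
    and const: "\<And>i \<omega>. i \<in> I \<Longrightarrow> \<omega> \<in> B i \<Longrightarrow> x \<omega> = v i"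
  shows "(\<Sum>u\<in>x ` \<Omega>. u * l {\<omega>\<in>\<Omega>. x \<omega> = u}) = (\<Sum>i\<in>I. v i * l (B i))"
proof -
  let ?J = "{i\<in>I. v i \<in> x ` \<Omega>}"
  have "x ` \<Omega> \<subseteq> v ` I"
    using cover const by fastforce
  then have finite_values: "finite (x ` \<Omega>)"
    using \<open>finite I\<close> by (meson finite_surj)
  have "(\<Sum>u\<in>x ` \<Omega>. u * l {\<omega>\<in>\<Omega>. x \<omega> = u})
      = (\<Sum>u\<in>x ` \<Omega>. \<Sum>i\<in>{i\<in>?J. v i = u}. v i * l (B i))"
  proof (intro sum.cong refl)
    fix u assume "u \<in> x ` \<Omega>"
    then have J: "{i\<in>?J. v i = u} = {i\<in>I. v i = u}" by auto
    have "l {\<omega>\<in>\<Omega>. x \<omega> = u} = l (\<Union>i\<in>{i\<in>I. v i = u}. B i)"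
      using level_set_eq_UN_partition[OF cover const] by simp
    also have "\<dots> = (\<Sum>i\<in>{i\<in>I. v i = u}. l (B i))"
      using assms(1-6) by (intro additive_on_finite_UN) (auto intro: disjoint_family_on_mono)
    finally have "l {\<omega>\<in>\<Omega>. x \<omega> = u} = (\<Sum>i\<in>{i\<in>I. v i = u}. l (B i))" .
    then show "u * l {\<omega>\<in>\<Omega>. x \<omega> = u} = (\<Sum>i\<in>{i\<in>?J. v i = u}. v i * l (B i))"
      unfolding J by (simp add: sum_distrib_left)
  qed
  also have "\<dots> = (\<Sum>i\<in>?J. v i * l (B i))"
    using \<open>finite I\<close> finite_values
    by (intro sum.group[of ?J "x ` \<Omega>" v "\<lambda>i. v i * l (B i)"]) auto
  also have "\<dots> = (\<Sum>i\<in>I. v i * l (B i))"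
  proof (intro sum.mono_neutral_left)
    show "\<forall>i\<in>I - ?J. v i * l (B i) = 0"
    proof
      fix i assume i: "i \<in> I - ?J"
      have "\<omega> \<notin> B i" for \<omega>
      proof
        assume "\<omega> \<in> B i"
        then have "\<omega> \<in> \<Omega>" "x \<omega> = v i" using cover const i by auto
        then have "v i \<in> x ` \<Omega>" by (metis image_eqI)
        then show False using i by blast
      qed
      then have "B i = {}" by blast
      then show "v i * l (B i) = 0" by (simp add: assms(3))
    qed
  qed (use \<open>finite I\<close> in auto)
  finally show ?thesis .
qed

lemma lintegral_fin_partition:
  assumes alg: "algebra \<Omega> \<Sigma>" and "additive_on \<Sigma> l" "l {} = 0"
    and "finite I" "\<And>i. i \<in> I \<Longrightarrow> B i \<in> \<Sigma>" "disjoint_family_on B I"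
    and cover: "(\<Union>i\<in>I. B i) = \<Omega>"
    and const: "\<And>i \<omega>. i \<in> I \<Longrightarrow> \<omega> \<in> B i \<Longrightarrow> x \<omega> = v i"
  shows "lintegral_fin \<Omega> l x = (\<Sum>i\<in>I. v i * l (B i))"
proof -
  have "{\<omega>\<in>\<Omega>. x \<omega> = u} \<in> \<Sigma>" for u
  proof -
    have "{\<omega>\<in>\<Omega>. x \<omega> = u} = (\<Union>i\<in>{i\<in>I. v i = u}. B i)"
      by (rule level_set_eq_UN_partition[OF cover const])
    also have "\<dots> \<in> \<Sigma>"
      using assms(4,5) alg by (intro algebra.axioms(1)[THEN ring_of_sets.finite_UN]) auto
    finally show ?thesis .
  qed
  then have "lintegral_fin \<Omega> l x = (\<Sum>u\<in>x ` \<Omega>. u * l {\<omega>\<in>\<Omega>. x \<omega> = u})"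
    by (rule lintegral_fin_eq_sum_level_sets[OF assms(1-3)])
  also have "\<dots> = (\<Sum>i\<in>I. v i * l (B i))"
    using assms by (rule sum_level_sets_eq_sum_partition)
  finally show ?thesis .
qed

definition generated_atom :: "'a set \<Rightarrow> ('i \<Rightarrow> 'a set) \<Rightarrow> 'i set \<Rightarrow> 'i set \<Rightarrow> 'a set" where
  "generated_atom \<Omega> A K S = {\<omega>\<in>\<Omega>. \<forall>k\<in>K. \<omega> \<in> A k \<longleftrightarrow> k \<in> S}"

lemma generated_atom_in_algebra:
  assumes "algebra \<Omega> \<Sigma>" "finite K" "\<And>k. k \<in> K \<Longrightarrow> A k \<in> \<Sigma>"
  shows "generated_atom \<Omega> A K S \<in> \<Sigma>"
proof -
  interpret algebra \<Omega> \<Sigma> by fact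
  have "generated_atom \<Omega> A K S = \<Omega> - (\<Union>k\<in>K. if k \<in> S then \<Omega> - A k else A k)"
    using assms(3) sets_into_space by (auto simp: generated_atom_def)
  also have "\<dots> \<in> \<Sigma>"
    using assms(2,3) by (intro Diff top finite_UN) auto
  finally show ?thesis .
qed

lemma disjoint_family_generated_atoms:
  "disjoint_family_on (generated_atom \<Omega> A K) (Pow K)"
  by (auto simp: disjoint_family_on_def generated_atom_def)

lemma UN_generated_atoms: "(\<Union>S\<in>Pow K. generated_atom \<Omega> A K S) = \<Omega>"
proof (intro equalityI subsetI)
  fix \<omega> assume "\<omega> \<in> \<Omega>"
  then have "\<omega> \<in> generated_atom \<Omega> A K {k\<in>K. \<omega> \<in> A k}"
    by (simp add: generated_atom_def)
  then show "\<omega> \<in> (\<Union>S\<in>Pow K. generated_atom \<Omega> A K S)"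
    by (intro UN_I[of "{k\<in>K. \<omega> \<in> A k}"]) auto
qed (auto simp: generated_atom_def)

lemma eq_UN_generated_atoms:
  assumes "k \<in> K" "A k \<subseteq> \<Omega>"
  shows "A k = (\<Union>S\<in>{S\<in>Pow K. k \<in> S}. generated_atom \<Omega> A K S)"
proof (intro equalityI subsetI)
  fix \<omega> assume "\<omega> \<in> A k"
  then have "\<omega> \<in> generated_atom \<Omega> A K {k\<in>K. \<omega> \<in> A k}"
    using assms(2) by (auto simp: generated_atom_def)
  then show "\<omega> \<in> (\<Union>S\<in>{S\<in>Pow K. k \<in> S}. generated_atom \<Omega> A K S)"
    using \<open>\<omega> \<in> A k\<close> assms(1) by (intro UN_I[of "{k\<in>K. \<omega> \<in> A k}"]) auto
qed (use assms(1) in \<open>auto simp: generated_atom_def\<close>)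

lemma sum_indicator_on_generated_atom:
  fixes c :: "'i \<Rightarrow> real"
  assumes "finite K" "S \<subseteq> K" "\<omega> \<in> generated_atom \<Omega> A K S"
  shows "(\<Sum>k\<in>K. c k * indicator (A k) \<omega>) = (\<Sum>k\<in>S. c k)"
proof -
  have "(\<Sum>k\<in>K. c k * indicator (A k) \<omega>) = (\<Sum>k\<in>K. if k \<in> S then c k else 0)"
    using assms(3) by (intro sum.cong) (auto simp: generated_atom_def)
  also have "\<dots> = (\<Sum>k\<in>S. c k)"
    using assms(1,2) by (simp add: sum.If_cases Int_absorb1)
  finally show ?thesis .
qed

lemma lintegral_fin_simple_function:
  fixes c :: "'i \<Rightarrow> real"
  assumes alg: "algebra \<Omega> \<Sigma>" and add: "additive_on \<Sigma> l" and l0: "l {} = 0"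
    and K: "finite K" and A: "\<And>k. k \<in> K \<Longrightarrow> A k \<in> \<Sigma>"
  shows "lintegral_fin \<Omega> l (\<lambda>\<omega>. \<Sum>k\<in>K. c k * indicator (A k) \<omega>) = (\<Sum>k\<in>K. c k * l (A k))"
proof -
  define x where "x \<omega> = (\<Sum>k\<in>K. c k * indicator (A k) \<omega>)" for \<omega>
  let ?atom = "generated_atom \<Omega> A K"
  have atoms: "finite (Pow K)" "\<And>S. S \<in> Pow K \<Longrightarrow> ?atom S \<in> \<Sigma>"
    "disjoint_family_on ?atom (Pow K)" "(\<Union>S\<in>Pow K. ?atom S) = \<Omega>"
    using K by (simp_all add: generated_atom_in_algebra[OF alg K A]
        disjoint_family_generated_atoms UN_generated_atoms)
  have const: "x \<omega> = sum c S" if "S \<in> Pow K" "\<omega> \<in> ?atom S" for S \<omega>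
    using sum_indicator_on_generated_atom[OF K] that by (simp add: x_def)
  have "lintegral_fin \<Omega> l x = (\<Sum>S\<in>Pow K. sum c S * l (?atom S))"
    by (rule lintegral_fin_partition[OF alg add l0 atoms const])
  also have "\<dots> = (\<Sum>S\<in>Pow K. \<Sum>k\<in>{k\<in>K. k \<in> S}. c k * l (?atom S))"
    by (intro sum.cong refl) (auto simp: sum_distrib_right Int_def[symmetric] Int_absorb1)
  also have "\<dots> = (\<Sum>k\<in>K. \<Sum>S\<in>{S\<in>Pow K. k \<in> S}. c k * l (?atom S))"
    using K by (intro sum.swap_restrict[symmetric]) auto
  also have "\<dots> = (\<Sum>k\<in>K. c k * l (A k))"
  proof (intro sum.cong refl)
    fix k assume "k \<in> K"
    moreover have "A k \<subseteq> \<Omega>"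
      using A[OF \<open>k \<in> K\<close>] alg by (auto simp: algebra_iff_Un)
    ultimately have "l (A k) = l (\<Union>S\<in>{S\<in>Pow K. k \<in> S}. ?atom S)"
      using eq_UN_generated_atoms by metis
    also have "\<dots> = (\<Sum>S\<in>{S\<in>Pow K. k \<in> S}. l (?atom S))"
      using atoms(1,2) disjoint_family_on_mono[OF _ atoms(3), of "{S\<in>Pow K. k \<in> S}"]
      by (intro additive_on_finite_UN[OF alg add l0]) auto
    finally have "l (A k) = (\<Sum>S\<in>{S\<in>Pow K. k \<in> S}. l (?atom S))" .
    then show "(\<Sum>S\<in>{S\<in>Pow K. k \<in> S}. c k * l (?atom S)) = c k * l (A k)"
      by (simp add: sum_distrib_left)
  qed
  finally show ?thesis by (simp add: x_def[abs_def])
qed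

lemma lintegral_fin_level_choice:
  assumes "level_choice \<Omega> t x \<phi>"
  shows "lintegral_fin \<Omega> l x
    = (\<Sum>k<length (desc_vals \<Omega> x). (alpha \<Omega> x k - alpha \<Omega> x (Suc k)) * l (t (\<phi> k)))"
  unfolding lintegral_fin_def
proof (intro sum.cong refl)
  fix k assume "k \<in> {..<length (desc_vals \<Omega> x)}"
  then have "{\<omega>\<in>\<Omega>. alpha \<Omega> x k \<le> x \<omega>} = t (\<phi> k)"
    using assms superlevel_set_eq_UN_level_sets[of k \<Omega> x] by (auto simp: level_choice_def)
  then show "(alpha \<Omega> x k - alpha \<Omega> x (Suc k)) * l {\<omega>\<in>\<Omega>. alpha \<Omega> x k \<le> x \<omega>}
      = (alpha \<Omega> x k - alpha \<Omega> x (Suc k)) * l (t (\<phi> k))"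
    by simp
qed

definition point_bet :: "'p form \<Rightarrow> 'p form \<Rightarrow> real" where
  "point_bet a = (\<lambda>c. if c = a then 1 else 0)"

definition calibration_bet :: "real \<Rightarrow> 'p form \<Rightarrow> real" where
  "calibration_bet p = (\<lambda>c. if c = TT then p else if c = FF then 1 - p else 0)"

lemma bet_value_eq_sum_superset:
  assumes "finite F" "supp b \<subseteq> F"
  shows "bet_value t l b = (\<Sum>a\<in>F. b a * l (t a))"
  unfolding bet_value_def using assms by (intro sum.mono_neutral_left) (auto simp: supp_def)

lemma is_betI:
  assumes "finite F" "supp b \<subseteq> F" "\<And>a. 0 \<le> b a \<and> b a \<le> 1" "(\<Sum>a\<in>F. b a) = 1"
  shows "is_bet b"
proof -
  have "(\<Sum>a\<in>supp b. b a) = (\<Sum>a\<in>F. b a)"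
    using assms(1,2) by (intro sum.mono_neutral_left) (auto simp: supp_def)
  then show ?thesis
    using assms finite_subset unfolding is_bet_def by auto
qed

lemma supp_point_bet: "supp (point_bet a) \<subseteq> {a}"
  by (auto simp: supp_def point_bet_def)

lemma supp_calibration_bet: "supp (calibration_bet p) \<subseteq> {TT, FF}"
  by (auto simp: supp_def calibration_bet_def)

lemma is_bet_point_bet: "is_bet (point_bet a)"
  by (rule is_betI[OF _ supp_point_bet]) (auto simp: point_bet_def)

lemma bet_value_point_bet: "bet_value t l (point_bet a) = l (t a)"
  by (subst bet_value_eq_sum_superset[OF _ supp_point_bet]) (auto simp: point_bet_def)

lemma is_bet_calibration_bet: "0 \<le> p \<Longrightarrow> p \<le> 1 \<Longrightarrow> is_bet (calibration_bet p)"
  by (rule is_betI[OF _ supp_calibration_bet]) (auto simp: calibration_bet_def)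

lemma bet_value_calibration_bet:
  "bet_value t l (calibration_bet p) = p * l (t TT) + (1 - p) * l (t FF)"
  by (subst bet_value_eq_sum_superset[OF _ supp_calibration_bet]) (auto simp: calibration_bet_def)

lemma represents_bet_value_eq:
  assumes "represents t l pref" "represents t' l' pref" "is_bet b" "is_bet b'"
    and "bet_value t l b = bet_value t l b'"
  shows "bet_value t' l' b = bet_value t' l' b'"
proof -
  have "pref b b'" "pref b' b"
    using assms(1,3-5) unfolding represents_def by auto
  then show ?thesis
    using assms(2-4) unfolding represents_def by force
qed

lemma represents_same_likelihood:
  assumes "subjective_model \<Omega> \<Sigma> t l" "represents t l pref"
    and "subjective_model \<Omega>' \<Sigma>' t' l'" "represents t' l' pref"
  shows "l (t a) = l' (t' a)"
proof -
  let ?p = "l (t a)"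
  have "0 \<le> ?p" "?p \<le> 1"
    using assms(1) by (auto simp: subjective_model_def likelihood_appraisal_def)
  then have calibration: "is_bet (calibration_bet ?p)"
    by (rule is_bet_calibration_bet)
  have "bet_value t l (calibration_bet ?p) = ?p" "bet_value t' l' (calibration_bet ?p) = ?p"
    using assms(1,3)
    by (simp_all add: bet_value_calibration_bet subjective_model_def truth_valuation_def
        likelihood_appraisal_def)
  with represents_bet_value_eq[OF assms(2,4) is_bet_point_bet calibration]
  show ?thesis by (simp add: bet_value_point_bet)
qed

theorem proposition9:
  fixes pref :: "('p form \<Rightarrow> real) \<Rightarrow> ('p form \<Rightarrow> real) \<Rightarrow> bool"
    and \<Omega> :: "'w set" and \<Sigma> :: "'w set set" and t :: "'p form \<Rightarrow> 'w set" and l :: "'w set \<Rightarrow> real"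
    and \<Omega>' :: "'v set" and \<Sigma>' :: "'v set set" and t' :: "'p form \<Rightarrow> 'v set" and l' :: "'v set \<Rightarrow> real"
  assumes "subjective_model \<Omega> \<Sigma> t l" and "represents t l pref"
    and "subjective_model \<Omega>' \<Sigma>' t' l'" and "represents t' l' pref"
    and "sound \<Omega> t" and "exact \<Omega>' t'" and "additive_on \<Sigma>' l'"
    and "is_strategy s"
    and "level_choice \<Omega> t (t_circ t s) \<phi>"
  shows "lintegral_fin \<Omega> l (t_circ t s) = lintegral_fin \<Omega>' l' (xi \<Omega> (t_circ t s) t' \<phi>)"
proof -
  let ?x = "t_circ t s"
  let ?n = "length (desc_vals \<Omega> ?x)" and ?c = "\<lambda>k. alpha \<Omega> ?x k - alpha \<Omega> ?x (Suc k)"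
  have "lintegral_fin \<Omega> l ?x = (\<Sum>k<?n. ?c k * l (t (\<phi> k)))"
    by (rule lintegral_fin_level_choice[OF assms(9)])
  also have "\<dots> = (\<Sum>k<?n. ?c k * l' (t' (\<phi> k)))"
    using represents_same_likelihood[OF assms(1-4)] by simp
  also have "\<dots> = lintegral_fin \<Omega>' l' (xi \<Omega> ?x t' \<phi>)"
    unfolding xi_def[abs_def] using assms(3,7)
    by (intro lintegral_fin_simple_function[symmetric])
      (auto simp: subjective_model_def likelihood_appraisal_def)
  finally show ?thesis .
qed

end
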